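(* Fix $p>0$. Let $\ell$ be the set of real sequences, $\mathbf e_j\in\ell$ the $j$-th unit vector, $\mathcal X=\{\mathbf e_1,\mathbf e_2,\dots\}$, and identify $f=(f_j)\in\ell$ with the function $f(\mathbf e_j)=f_j$ on $\mathcal X$. Let $B_p=\{g\in\ell:|g_j|\le j^{-1/p}\ \forall j\}$ and $\mathcal F=\{f\in\ell: f_j=(1+g_j)/2,\ g\in B_p\}$. Then: (a) there is a constant $A$ depending only on $p$ such that $\mathcal H_2(\mathcal F,\epsilon)\le(A/\epsilon)^p$ for all $\epsilon>0$ and all $n$; (b) there is an absolute constant $c>0$ such that for every $n\ge1$, $\inf_{\hat f}\sup\mathbb E\|\hat f-\eta\|^2\ge cn^{-2/(2+p)}$, where the supremum is over distributions of $(X,Y)$ on $\mathcal X\times\{0,1\}$ with $\eta\in\mathcal F$; (c) if $p\ge2$, for every $n\ge1$, $\inf_{\hat f}\sup_{P_{XY}}\{\mathbb E\|\hat f-\eta\|^2-\inf_{f\in\mathcal F}\|f-\eta\|^2\}\ge cn^{-1/(p-1)}$, the supremum over all distributions on $\mathcal X\times[0,1]$.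
   Context: A sample $D_n$ consists of $n$ i.i.d. copies of $(X,Y)$; estimators $\hat f$ are measurable functions of $D_n$ with values in $\ell$; $\eta(x)=\mathbb E[Y\mid X=x]$; $\|f\|^2=\int f^2\,d\mu_X$ with $\mu_X$ the law of $X$. For $S=\{(x_i,y_i)\}_{i\le n}$, $\mathcal N_2(\mathcal F,\epsilon,S)$ is the minimal size of an $\epsilon$-cover of $\mathcal F$ in the pseudo-metric $(\frac1n\sum_i(f(x_i)-g(x_i))^2)^{1/2}$, and $\mathcal H_2(\mathcal F,\epsilon)=\sup_S\log\mathcal N_2(\mathcal F,\epsilon,S)$ over all $S\in(\mathcal X\times[0,1])^n$. *)

theory Defs
  imports "HOL-Probability.Probability"
begin

text \<open>Index convention: the point e_(j+1) of the paper is represented by j :: nat,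
  so X = nat and an element f of the sequence space is a function nat => real.\<close>

definition Bp :: "real \<Rightarrow> (nat \<Rightarrow> real) set" where
  "Bp p = {g. \<forall>j. \<bar>g j\<bar> \<le> real (Suc j) powr (-1 / p)}"

definition Fcls :: "real \<Rightarrow> (nat \<Rightarrow> real) set" where
  "Fcls p = {f. \<exists>g\<in>Bp p. f = (\<lambda>j. (1 + g j) / 2)}"

definition emp_dist :: "(nat \<times> real) list \<Rightarrow> (nat \<Rightarrow> real) \<Rightarrow> (nat \<Rightarrow> real) \<Rightarrow> real" where
  "emp_dist S f g = sqrt ((\<Sum>z\<leftarrow>S. (f (fst z) - g (fst z))^2) / real (length S))"

text \<open>Minimal size of an eps-cover (infinity if no finite cover exists).\<close>
definition cover_num :: "(nat \<Rightarrow> real) set \<Rightarrow> real \<Rightarrow> (nat \<times> real) list \<Rightarrow> enat" where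
  "cover_num F eps S =
     (INF C \<in> {C. finite C \<and> (\<forall>f\<in>F. \<exists>g\<in>C. emp_dist S f g \<le> eps)}. enat (card C))"

definition H2 :: "(nat \<Rightarrow> real) set \<Rightarrow> real \<Rightarrow> nat \<Rightarrow> ereal" where
  "H2 F eps n = (SUP S \<in> {S. length S = n \<and> (\<forall>z\<in>set S. snd z \<in> {0..1})}.
      (case cover_num F eps S of enat k \<Rightarrow> ereal (ln (real k)) | \<infinity> \<Rightarrow> \<infinity>))"

abbreviation obs_space :: "(nat \<times> real) measure" where
  "obs_space \<equiv> count_space UNIV \<Otimes>\<^sub>M borel"

definition sample_space :: "nat \<Rightarrow> (nat \<Rightarrow> nat \<times> real) measure" where
  "sample_space n = PiM {..<n} (\<lambda>_. obs_space)"

definition estimators :: "nat \<Rightarrow> ((nat \<Rightarrow> nat \<times> real) \<Rightarrow> (nat \<Rightarrow> real)) set" where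
  "estimators n = {fh. \<forall>j. (\<lambda>D. fh D j) \<in> borel_measurable (sample_space n)}"

definition dists :: "real set \<Rightarrow> (nat \<times> real) measure set" where
  "dists Yset = {M. prob_space M \<and> sets M = sets obs_space \<and> measure M (UNIV \<times> Yset) = 1}"

definition marg :: "(nat \<times> real) measure \<Rightarrow> nat measure" where
  "marg M = distr M (count_space UNIV) fst"

text \<open>Regression function E[Y | X = x] (X is discrete); set to 0 where P(X=x)=0.\<close>
definition eta :: "(nat \<times> real) measure \<Rightarrow> nat \<Rightarrow> real" where
  "eta M x = (\<integral>z. snd z * indicator ({x} \<times> UNIV) z \<partial>M) / measure M ({x} \<times> UNIV)"

definition sqdist :: "(nat \<times> real) measure \<Rightarrow> (nat \<Rightarrow> real) \<Rightarrow> (nat \<Rightarrow> real) \<Rightarrow> ennreal" where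
  "sqdist M f g = (\<integral>\<^sup>+ x. ennreal ((f x - g x)^2) \<partial>marg M)"

definition risk :: "nat \<Rightarrow> (nat \<times> real) measure \<Rightarrow> ((nat \<Rightarrow> nat \<times> real) \<Rightarrow> (nat \<Rightarrow> real)) \<Rightarrow> ennreal" where
  "risk n M fh = (\<integral>\<^sup>+ D. sqdist M (fh D) (eta M) \<partial>PiM {..<n} (\<lambda>_. M))"

text \<open>eta belongs to F (up to mu_X-null sets, where E[Y|X] is not determined).\<close>
definition eta_in :: "(nat \<times> real) measure \<Rightarrow> (nat \<Rightarrow> real) set \<Rightarrow> bool" where
  "eta_in M F \<longleftrightarrow> (\<exists>f\<in>F. \<forall>x. measure M ({x} \<times> UNIV) > 0 \<longrightarrow> f x = eta M x)"

end

theory Submission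
  imports Defs
begin

(*
  Every f in F_p lies within eps of 1/2 beyond coordinate N = (2 eps)^(-p), and
      on the first N coordinates it can be rounded to a lattice of mesh 2 eps.  The resulting
      grid is a uniform (hence empirical) eps-cover, and counting its points gives
      ln #grid <= (6 + 8/p) eps^(-p).

  (b), (c) Lower bounds, by Assouad's lemma on a hypercube of distributions: X uniform on m
      cells, P(Y = 1 | X = j) = 1/2 +- delta according to a sign_of vector sigma.  Flipping one sign_of moves eta by
      2 delta on one cell, so the average risk over all sign_of vectors is at least delta^2 times
      the overlap of the two sample laws, which we bound below through the Hellinger affinity.
      For (b) we take m ~ n^(p/(p+2)) and delta ~ n^(-1/(p+2)); for (c) we take delta = 1/2
      (noiseless labels), m ~ n^(p/(p-1)) and compare with an explicit oracle in F_p.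
*)

lemma emp_dist_le:
  assumes "\<And>x. \<bar>f x - g x\<bar> \<le> eps" "0 \<le> eps"
  shows "emp_dist S f g \<le> eps"
proof (cases "S = []")
  case True then show ?thesis using assms by (simp add: emp_dist_def)
next
  case False
  have "(\<Sum>z\<leftarrow>S. (f (fst z) - g (fst z))^2) \<le> (\<Sum>z\<leftarrow>S. eps^2)"
  proof (rule sum_list_mono)
    fix z
    have "\<bar>f (fst z) - g (fst z)\<bar>^2 \<le> eps^2" using assms by (intro power_mono) auto
    then show "(f (fst z) - g (fst z))^2 \<le> eps^2" by simp
  qed
  then have "(\<Sum>z\<leftarrow>S. (f (fst z) - g (fst z))^2) / real (length S) \<le> eps^2"
    using False by (simp add: sum_list_triv divide_le_eq mult.commute)
  then have "emp_dist S f g \<le> sqrt (eps^2)" unfolding emp_dist_def by (rule real_sqrt_le_mono)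
  then show ?thesis using assms by simp
qed

lemma H2_le_cover:
  assumes Fne: "F \<noteq> {}" and fC: "finite C" and cov: "\<And>S f. f \<in> F \<Longrightarrow> \<exists>g\<in>C. emp_dist S f g \<le> eps"
  shows "H2 F eps n \<le> ereal (ln (real (card C)))"
  unfolding H2_def
proof (rule SUP_least)
  fix S :: "(nat \<times> real) list"
  have "cover_num F eps S \<le> enat (card C)"
    unfolding cover_num_def by (rule INF_lower) (use fC cov in auto)
  then obtain k where k: "cover_num F eps S = enat k" "k \<le> card C"
    by (cases "cover_num F eps S") auto
  have "ln (real k) \<le> ln (real (card C))"
  proof (cases "k = 0")
    case True
    have "C \<noteq> {}" using Fne cov by blast
    then have "1 \<le> card C" using fC by (simp add: Suc_le_eq card_gt_0_iff)
    then show ?thesis using True by simp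
  next
    case False then show ?thesis using k by simp
  qed
  then show "(case cover_num F eps S of enat k \<Rightarrow> ereal (ln (real k)) | \<infinity> \<Rightarrow> \<infinity>) \<le> ereal (ln (real (card C)))"
    using k by simp
qed

lemma Fcls_ne: "Fcls p \<noteq> {}"
proof -
  have "(\<lambda>_. 0) \<in> Bp p" by (simp add: Bp_def)
  then show ?thesis unfolding Fcls_def by blast
qed

lemma Fcls_bound:
  assumes "f \<in> Fcls p"
  shows "\<bar>f j - 1/2\<bar> \<le> real (Suc j) powr (-1/p) / 2"
proof -
  obtain g where g: "g \<in> Bp p" "f = (\<lambda>j. (1 + g j) / 2)" using assms unfolding Fcls_def by blast
  then have "\<bar>g j\<bar> \<le> real (Suc j) powr (-1/p)" unfolding Bp_def by blast
  moreover have "f j - 1/2 = g j / 2" using g(2) by (simp add: field_simps)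
  ultimately show ?thesis by (simp only:)
qed

lemma sum_inv_sqrt: "(\<Sum>j<J. 1 / sqrt (real (Suc j))) \<le> 2 * sqrt (real J)"
proof (induction J)
  case 0 then show ?case by simp
next
  case (Suc J)
  define a where "a = sqrt (real J)"
  define c where "c = sqrt (real (Suc J))"
  have c0: "c > 0" unfolding c_def by simp
  have cc: "c * c = a * a + 1" unfolding a_def c_def by simp
  have "2 * a * c \<le> a * a + c * c"
  proof -
    have "0 \<le> (a - c) * (a - c)" by simp
    then show ?thesis by (simp add: algebra_simps)
  qed
  then have "2 * a * c + 1 \<le> 2 * (c * c)" using cc by simp
  then have "(2 * a * c + 1) / c \<le> 2 * (c * c) / c" using c0 by (intro divide_right_mono) auto
  then have "2 * a + 1 / c \<le> 2 * c" using c0 by (simp add: add_divide_distrib)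
  moreover have "(\<Sum>j<Suc J. 1 / sqrt (real (Suc j))) = (\<Sum>j<J. 1 / sqrt (real (Suc j))) + 1 / c"
    by (simp add: c_def)
  ultimately show ?case using Suc.IH unfolding a_def c_def by linarith
qed

lemma ln_le_2sqrt: "z > 0 \<Longrightarrow> ln z \<le> 2 * sqrt z"
proof -
  assume z: "z > 0"
  have "ln (sqrt z) \<le> sqrt z - 1" using z by (intro ln_le_minus_one) auto
  then show ?thesis using z by (simp add: ln_sqrt)
qed

text \<open>The covering grid at scale \<open>eps\<close>: the first \<open>grid_dim p eps\<close> coordinates range over the
  lattice \<open>1/2 + 2 eps \<int>\<close>, restricted to the window \<open>\<bar>f j - 1/2\<bar> \<le> (j+1) powr (-1/p) / 2\<close>
  allowed in \<open>Fcls p\<close>; all later coordinates are frozen at \<open>1/2\<close>, since there the whole window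
  is already within \<open>eps\<close> of \<open>1/2\<close>.\<close>

definition grid_dim :: "real \<Rightarrow> real \<Rightarrow> nat" where
  "grid_dim p eps = nat \<lceil>(2*eps) powr (-p)\<rceil>"

definition grid_radius :: "real \<Rightarrow> real \<Rightarrow> nat \<Rightarrow> nat" where
  "grid_radius p eps j = nat \<lceil>real (Suc j) powr (-1/p) / (4*eps)\<rceil>"

definition grid_values :: "real \<Rightarrow> real \<Rightarrow> nat \<Rightarrow> real set" where
  "grid_values p eps j =
     (\<lambda>k::int. 1/2 + 2*eps * of_int k) ` {- int (grid_radius p eps j)..int (grid_radius p eps j)}"

definition grid :: "real \<Rightarrow> real \<Rightarrow> (nat \<Rightarrow> real) set" where
  "grid p eps = PiE_dflt {..<grid_dim p eps} (1/2) (grid_values p eps)"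

lemma round_to_lattice:
  assumes e0: "eps > 0"
  shows "\<bar>x - 2*eps * of_int \<lfloor>x/(2*eps) + 1/2\<rfloor>\<bar> \<le> eps"
proof -
  define y where "y = x/(2*eps)"
  have "\<bar>y - of_int \<lfloor>y + 1/2\<rfloor>\<bar> \<le> 1/2" by linarith
  then have "2*eps*\<bar>y - of_int \<lfloor>y + 1/2\<rfloor>\<bar> \<le> 2*eps*(1/2)" using e0 by (intro mult_left_mono) auto
  moreover have "x - 2*eps * of_int \<lfloor>x/(2*eps) + 1/2\<rfloor> = 2*eps*(y - of_int \<lfloor>y + 1/2\<rfloor>)"
    unfolding y_def using e0 by (simp add: algebra_simps)
  ultimately show ?thesis using e0 by (simp add: abs_mult)
qed

lemma grid_covers:
  assumes p: "p > 0" and e0: "eps > 0" and f: "f \<in> Fcls p"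
  shows "\<exists>g\<in>grid p eps. \<forall>j. \<bar>f j - g j\<bar> \<le> eps"
proof -
  define J where "J = grid_dim p eps"
  define b where "b j = real (Suc j) powr (-1/p)" for j
  define round where "round x = 2*eps * of_int \<lfloor>x/(2*eps) + 1/2\<rfloor>" for x
  define h where "h j = (if j < J then 1/2 + round (f j - 1/2) else 1/2)" for j
  have fb: "\<bar>f j - 1/2\<bar> \<le> b j / 2" for j using Fcls_bound[OF f] unfolding b_def .
  have "h \<in> grid p eps"
    unfolding grid_def PiE_dflt_def J_def[symmetric]
  proof (intro CollectI allI conjI impI)
    fix j assume j: "j \<in> {..<J}"
    define x where "x = (f j - 1/2)/(2*eps)"
    define k where "k = \<lfloor>x + 1/2\<rfloor>"
    define r where "r = b j / (4*eps)"
    have xb: "\<bar>x\<bar> \<le> r" unfolding x_def r_def using fb[of j] e0 by (simp add: abs_divide field_simps)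
    have "0 \<le> r" unfolding r_def b_def using e0 by simp
    then have Kj: "int (grid_radius p eps j) = \<lceil>r\<rceil>"
      unfolding grid_radius_def r_def b_def by simp
    have "of_int k \<le> x + 1/2" "x + 1/2 < of_int k + 1" unfolding k_def by linarith+
    then have "k \<in> {- int (grid_radius p eps j)..int (grid_radius p eps j)}"
      unfolding Kj using xb le_of_int_ceiling[of r] by simp linarith
    then show "h j \<in> grid_values p eps j"
      using j unfolding h_def grid_values_def round_def k_def x_def by auto
  next
    fix j assume "j \<notin> {..<J}" then show "h j = 1/2" unfolding h_def by simp
  qed
  moreover have "\<bar>f j - h j\<bar> \<le> eps" for j
  proof (cases "j < J")
    case True
    then show ?thesis using round_to_lattice[OF e0, of "f j - 1/2"] by (simp add: h_def round_def)
  next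
    case False
    have Jr0: "(2*eps) powr (-p) > 0" using e0 by simp
    have "(2*eps) powr (-p) \<le> real J" unfolding J_def grid_dim_def by linarith
    also have "\<dots> \<le> real (Suc j)" using False by simp
    finally have "real (Suc j) powr (-1/p) \<le> ((2*eps) powr (-p)) powr (-1/p)"
      using Jr0 p by (intro powr_mono2') auto
    also have "((2*eps) powr (-p)) powr (-1/p) = 2*eps" using e0 p by (simp add: powr_powr)
    finally have "b j / 2 \<le> eps" unfolding b_def by simp
    then show ?thesis using fb[of j] False by (simp add: h_def)
  qed
  ultimately show ?thesis by blast
qed

lemma finite_grid: "finite (grid p eps)"
  unfolding grid_def grid_values_def by (intro finite_PiE_dflt) auto

lemma card_grid: "real (card (grid p eps)) \<le> (\<Prod>j<grid_dim p eps. real (2 * grid_radius p eps j + 1))"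
proof -
  have "card (grid_values p eps j) \<le> 2 * grid_radius p eps j + 1" for j
  proof -
    have "card (grid_values p eps j) \<le> card {- int (grid_radius p eps j)..int (grid_radius p eps j)}"
      unfolding grid_values_def by (rule card_image_le) simp
    then show ?thesis by simp
  qed
  moreover have "card (grid p eps) = (\<Prod>j<grid_dim p eps. card (grid_values p eps j))"
    unfolding grid_def grid_values_def by (intro card_PiE_dflt) auto
  ultimately have "card (grid p eps) \<le> (\<Prod>j<grid_dim p eps. 2 * grid_radius p eps j + 1)"
    by (simp add: prod_mono)
  then show ?thesis by (simp only: of_nat_prod[symmetric] of_nat_le_iff)
qed

lemma grid_nonempty: "grid p eps \<noteq> {}"
  unfolding grid_def grid_values_def by (simp add: PiE_dflt_empty_iff)

text \<open>Each coordinate contributes at most \<open>ln 4 + (2/p) sqrt (N / (j+1))\<close> to \<open>ln (card grid)\<close>,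
  where \<open>N = (2 eps) powr (-p)\<close>; summing over \<open>j < grid_dim p eps \<approx> N\<close> gives order \<open>N\<close>.\<close>

lemma ln_grid_level:
  assumes p: "p > 0" and e0: "eps > 0"
  shows "ln (real (2 * grid_radius p eps j + 1))
           \<le> ln 4 + (2/p) * sqrt ((2*eps) powr (-p) / real (Suc j))"
proof -
  define N where "N = (2*eps) powr (-p)"
  define b where "b = real (Suc j) powr (-1/p)"
  define x where "x = b / (2*eps)"
  have b0: "0 \<le> b" and N0: "N > 0" unfolding b_def N_def using e0 by simp_all
  have "real (grid_radius p eps j) < b / (4*eps) + 1"
    unfolding grid_radius_def b_def[symmetric] using b0 e0 by (simp add: of_nat_nat) linarith
  then have K3: "real (2 * grid_radius p eps j + 1) \<le> x + 3" unfolding x_def by (simp add: field_simps)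
  have sq0: "0 \<le> (2/p) * sqrt (N / real (Suc j))" using p N0 by (intro mult_nonneg_nonneg) auto
  show ?thesis
  proof (cases "x \<le> 1")
    case True
    then have "ln (real (2 * grid_radius p eps j + 1)) \<le> ln 4" using K3 by (subst ln_le_cancel_iff) auto
    then show ?thesis using sq0 unfolding N_def by linarith
  next
    case False
    have x_eq: "x = (N / real (Suc j)) powr (1/p)"
    proof -
      have "N powr (1/p) = (2*eps) powr (-p * (1/p))" unfolding N_def by (rule powr_powr)
      also have "-p * (1/p) = -1" using p by simp
      finally have "N powr (1/p) = 1 / (2*eps)" using e0 by (simp add: powr_minus_divide)
      moreover have "b = 1 / real (Suc j) powr (1/p)" unfolding b_def by (simp add: powr_minus_divide)
      ultimately show ?thesis unfolding x_def by (simp add: powr_divide)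
    qed
    have "ln (real (2 * grid_radius p eps j + 1)) \<le> ln (4 * x)"
      using K3 False by (subst ln_le_cancel_iff) auto
    also have "\<dots> = ln 4 + (1/p) * ln (N / real (Suc j))"
      using False x_eq N0 by (simp add: ln_mult)
    also have "(1/p) * ln (N / real (Suc j)) \<le> (1/p) * (2 * sqrt (N / real (Suc j)))"
      using p N0 by (intro mult_left_mono ln_le_2sqrt) auto
    finally show ?thesis unfolding N_def by simp
  qed
qed

lemma ln_card_grid:
  assumes p: "p > 0" and e0: "0 < eps" and e1: "eps < 1"
  shows "ln (real (card (grid p eps))) \<le> (6 + 8/p) * eps powr (-p)"
proof -
  define N where "N = (2*eps) powr (-p)"
  define J where "J = grid_dim p eps"
  define E where "E = eps powr (-p)"
  have N0: "N > 0" unfolding N_def using e0 by simp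
  have E1: "1 \<le> E" unfolding E_def using e0 e1 p powr_mono'[of "-p" 0 eps] by simp
  have NE: "N \<le> E"
  proof -
    have "N = 2 powr (-p) * E" unfolding N_def E_def using e0 by (simp add: powr_mult)
    moreover have "2 powr (-p) \<le> 1" using p powr_mono[of "-p" 0 2] by simp
    ultimately show ?thesis using E1 by (simp add: mult_left_le_one_le)
  qed
  have JE: "real J \<le> 2 * E"
  proof -
    have "real J < N + 1" unfolding J_def grid_dim_def N_def[symmetric] using N0 by (simp add: of_nat_nat) linarith
    then show ?thesis using NE E1 by simp
  qed
  have "0 < real (card (grid p eps))" using finite_grid grid_nonempty by (simp add: card_gt_0_iff)
  then have "ln (real (card (grid p eps))) \<le> ln (\<Prod>j<J. real (2 * grid_radius p eps j + 1))"
    using card_grid unfolding J_def by (subst ln_le_cancel_iff) (auto intro: prod_pos)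
  also have "\<dots> = (\<Sum>j<J. ln (real (2 * grid_radius p eps j + 1)))" by (rule ln_prod) auto
  also have "\<dots> \<le> (\<Sum>j<J. ln 4 + (2/p) * sqrt (N / real (Suc j)))"
    unfolding N_def by (intro sum_mono ln_grid_level p e0)
  also have "\<dots> = real J * ln 4 + (2/p) * sqrt N * (\<Sum>j<J. 1 / sqrt (real (Suc j)))"
    by (simp add: sum.distrib sum_distrib_left real_sqrt_divide)
  also have "\<dots> \<le> real J * ln 4 + (2/p) * sqrt N * (2 * sqrt (real J))"
    using p N0 by (intro add_left_mono mult_left_mono sum_inv_sqrt mult_nonneg_nonneg) auto
  also have "\<dots> \<le> (6 + 8/p) * E"
  proof -
    have "sqrt N * sqrt (real J) \<le> sqrt E * sqrt (2 * E)"
      using NE JE N0 by (intro mult_mono real_sqrt_le_mono) auto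
    also have "\<dots> = sqrt 2 * E" using E1 by (simp add: real_sqrt_mult)
    also have "\<dots> \<le> 2 * E" using E1 by (intro mult_right_mono) (use real_sqrt_le_mono[of 2 4] in auto)
    finally have "(4/p) * (sqrt N * sqrt (real J)) \<le> (4/p) * (2 * E)" using p by (intro mult_left_mono) auto
    moreover have "real J * ln 4 \<le> (2*E) * 3" using JE ln_le_minus_one[of 4] E1 by (intro mult_mono) auto
    ultimately show ?thesis by (simp add: algebra_simps)
  qed
  finally show ?thesis unfolding E_def .
qed

text \<open>For \<open>eps < 1\<close> the grid is the cover; for \<open>eps \<ge> 1\<close> the single function \<open>1/2\<close> is.\<close>

lemma entropy_bound:
  assumes p: "p > 0"
  shows "\<exists>A>0. \<forall>n eps. eps > 0 \<longrightarrow> H2 (Fcls p) eps n \<le> ereal ((A / eps) powr p)"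
proof (intro exI[of _ "(6 + 8/p) powr (1/p)"] conjI allI impI)
  have c0: "0 < 6 + 8/p" using p by (intro add_pos_pos) auto
  then show "0 < (6 + 8/p) powr (1/p)" by simp
  fix n :: nat and eps :: real assume e0: "eps > 0"
  have bound: "((6 + 8/p) powr (1/p) / eps) powr p = (6 + 8/p) * eps powr (-p)"
    using c0 p e0 by (simp add: powr_divide powr_powr powr_minus_divide)
  show "H2 (Fcls p) eps n \<le> ereal (((6 + 8/p) powr (1/p) / eps) powr p)"
  proof (cases "eps < 1")
    case True
    have "H2 (Fcls p) eps n \<le> ereal (ln (real (card (grid p eps))))"
    proof (rule H2_le_cover[OF Fcls_ne finite_grid])
      fix S f assume "f \<in> Fcls p"
      with grid_covers[OF p e0] obtain g where "g \<in> grid p eps" "\<forall>j. \<bar>f j - g j\<bar> \<le> eps" by blast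
      then show "\<exists>g\<in>grid p eps. emp_dist S f g \<le> eps" using e0 by (intro bexI emp_dist_le) auto
    qed
    then show ?thesis unfolding bound using ln_card_grid[OF p e0 True] by (simp add: order_trans)
  next
    case False
    have "H2 (Fcls p) eps n \<le> ereal (ln (real (card {\<lambda>_::nat. 1/2::real})))"
    proof (rule H2_le_cover[OF Fcls_ne])
      fix S f assume f: "f \<in> Fcls p"
      have "\<bar>f j - 1/2\<bar> \<le> eps" for j
      proof -
        have "real (Suc j) powr (-1/p) \<le> 1" using p powr_mono[of "-1/p" 0 "real (Suc j)"] by simp
        then show ?thesis using Fcls_bound[OF f, of j] False by simp
      qed
      then have "emp_dist S f (\<lambda>_. 1/2) \<le> eps" using e0 by (intro emp_dist_le) auto
      then show "\<exists>g\<in>{\<lambda>_::nat. 1/2::real}. emp_dist S f g \<le> eps" by simp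
    qed simp
    then have "H2 (Fcls p) eps n \<le> ereal 0" by simp
    also have "\<dots> \<le> ereal ((6 + 8/p) * eps powr (-p))" using c0 by simp
    finally show ?thesis unfolding bound .
  qed
qed


lemma space_obs[simp]: "space obs_space = UNIV"
  by (simp add: space_pair_measure)

text \<open>For a pmf \<open>P\<close> on observations, the \<open>I\<close>-fold product of \<open>P\<close> (viewed on \<open>obs_space\<close>)
  is the image of \<open>Pi_pmf\<close> under restriction to \<open>I\<close>; this lets us compute risks as sums.\<close>

lemma PiM_eq_Pi_pmf:
  fixes P :: "(nat \<times> real) pmf" and d :: "nat \<times> real"
  assumes fI: "finite I"
  defines "M \<equiv> distr (measure_pmf P) obs_space id"
  shows "distr (measure_pmf (Pi_pmf I d (\<lambda>_. P))) (PiM I (\<lambda>_. M)) (\<lambda>x. restrict x I) = PiM I (\<lambda>_. M)"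
proof -
  have [simp]: "space M = UNIV" unfolding M_def by simp
  have "prob_space M" unfolding M_def
    by (intro prob_space.prob_space_distr measure_pmf.prob_space_axioms) (simp add: measurable_def)
  then interpret PS: product_prob_space "\<lambda>_. M"
    by (intro product_prob_spaceI)
  show ?thesis
  proof (rule PS.PiM_eqI)
    fix A assume A: "\<And>i. i \<in> I \<Longrightarrow> A i \<in> sets M"
    have "Pi\<^sub>E I A \<in> sets (Pi\<^sub>M I (\<lambda>i. M))"
      using A by (intro sets_PiM_I_finite fI) auto
    then have "emeasure (distr (measure_pmf (Pi_pmf I d (\<lambda>_. P))) (Pi\<^sub>M I (\<lambda>i. M)) (\<lambda>x. restrict x I)) (Pi\<^sub>E I A)
             = emeasure (measure_pmf (Pi_pmf I d (\<lambda>_. P))) ((\<lambda>x. restrict x I) -` Pi\<^sub>E I A)"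
      by (subst emeasure_distr) (auto simp: measurable_def space_PiM)
    also have "(\<lambda>x. restrict x I) -` Pi\<^sub>E I A = Pi I A" by (auto simp: PiE_def Pi_def)
    also have "emeasure (measure_pmf (Pi_pmf I d (\<lambda>_. P))) (Pi I A) = ennreal (\<Prod>i\<in>I. measure_pmf.prob P (A i))"
      unfolding measure_pmf.emeasure_eq_measure by (simp add: measure_Pi_pmf_Pi fI)
    also have "\<dots> = (\<Prod>i\<in>I. emeasure M (A i))"
      using A by (simp add: M_def emeasure_distr measure_pmf.emeasure_eq_measure prod_ennreal measurable_def)
    finally show "emeasure (distr (measure_pmf (Pi_pmf I d (\<lambda>_. P))) (Pi\<^sub>M I (\<lambda>i. M)) (\<lambda>x. restrict x I)) (Pi\<^sub>E I A)
                = (\<Prod>i\<in>I. emeasure M (A i))" .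
  qed (simp_all add: fI)
qed

lemma pmf_Pi_pmf_outside:
  assumes fI: "finite I" and sub: "set_pmf P \<subseteq> S" and x: "x \<notin> PiE_dflt I d (\<lambda>_. S)"
  shows "pmf (Pi_pmf I d (\<lambda>_. P)) x = 0"
proof -
  from x consider "\<exists>i. i \<notin> I \<and> x i \<noteq> d" | i where "i \<in> I" "x i \<notin> S"
    by (auto simp: PiE_dflt_def)
  then show ?thesis
  proof cases
    case 1 then show ?thesis by (auto simp: pmf_Pi fI)
  next
    case 2
    then have "pmf P (x i) = 0" using sub by (auto simp: set_pmf_eq)
    then show ?thesis using 2 fI by (auto simp: pmf_Pi)
  qed
qed

lemma nn_integral_PiM_pmf:
  fixes P :: "(nat\<times>real) pmf" and S :: "(nat \<times> real) set" and I :: "nat set"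
  assumes fI: "finite I" and fS: "finite S" and sub: "set_pmf P \<subseteq> S"
    and Fm: "F \<in> borel_measurable (PiM I (\<lambda>_. obs_space))"
  shows "(\<integral>\<^sup>+D. F D \<partial>PiM I (\<lambda>_. distr (measure_pmf P) obs_space id))
       = (\<Sum>D\<in>PiE I (\<lambda>_. S). (\<Prod>i\<in>I. ennreal (pmf P (D i))) * F D)"
proof -
  define M where "M = distr (measure_pmf P) obs_space id"
  define d :: "nat \<times> real" where "d = undefined"
  define Q where "Q = Pi_pmf I d (\<lambda>_. P)"
  have [simp]: "space M = UNIV" unfolding M_def by simp
  have Fm': "F \<in> borel_measurable (PiM I (\<lambda>_. M))"
  proof -
    have "sets (PiM I (\<lambda>_. M)) = sets (PiM I (\<lambda>_. obs_space))"
      by (intro sets_PiM_cong) (auto simp: M_def)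
    then show ?thesis using Fm measurable_cong_sets by blast
  qed
  have "(\<integral>\<^sup>+D. F D \<partial>PiM I (\<lambda>_. M)) = (\<integral>\<^sup>+D. F D \<partial>distr (measure_pmf Q) (PiM I (\<lambda>_. M)) (\<lambda>x. restrict x I))"
    unfolding Q_def M_def by (simp add: PiM_eq_Pi_pmf fI)
  also have "\<dots> = (\<integral>\<^sup>+x. F (restrict x I) \<partial>measure_pmf Q)"
    using Fm' by (intro nn_integral_distr) (simp_all add: measurable_def space_PiM)
  also have "\<dots> = (\<integral>\<^sup>+x. ennreal (pmf Q x) * F (restrict x I) \<partial>count_space UNIV)"
    by (rule nn_integral_measure_pmf)
  also have "\<dots> = (\<Sum>x\<in>PiE_dflt I d (\<lambda>_. S). ennreal (pmf Q x) * F (restrict x I))"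
  proof (rule nn_integral_count_space')
    show "finite (PiE_dflt I d (\<lambda>_. S))" using fI fS by auto
  next
    fix x assume "x \<notin> PiE_dflt I d (\<lambda>_. S)"
    then have "pmf Q x = 0" unfolding Q_def by (rule pmf_Pi_pmf_outside[OF fI sub])
    then show "ennreal (pmf Q x) * F (restrict x I) = 0" by simp
  qed simp
  also have "\<dots> = (\<Sum>x\<in>PiE_dflt I d (\<lambda>_. S). (\<Prod>i\<in>I. ennreal (pmf P (restrict x I i))) * F (restrict x I))"
  proof (rule sum.cong[OF refl])
    fix x assume x: "x \<in> PiE_dflt I d (\<lambda>_. S)"
    then have "pmf Q x = (\<Prod>i\<in>I. pmf P (x i))" by (auto simp: Q_def pmf_Pi fI PiE_dflt_def)
    then show "ennreal (pmf Q x) * F (restrict x I) = (\<Prod>i\<in>I. ennreal (pmf P (restrict x I i))) * F (restrict x I)"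
      by (simp add: prod_ennreal)
  qed
  also have "\<dots> = (\<Sum>D\<in>(\<lambda>h. restrict h I) ` PiE_dflt I d (\<lambda>_. S). (\<Prod>i\<in>I. ennreal (pmf P (D i))) * F D)"
    by (rule sum.reindex[symmetric, unfolded comp_def]) (force simp: inj_on_def PiE_dflt_def fun_eq_iff)
  also have "(\<lambda>h. restrict h I) ` PiE_dflt I d (\<lambda>_. S) = PiE I (\<lambda>_. S)" by (rule restrict_PiE_dflt)
  finally show ?thesis unfolding M_def .
qed
text \<open>For \<open>m\<close> cells, a bias \<open>\<delta> \<in> [0,1/2]\<close> and a sign_of vector
  \<open>\<sigma>\<close>, \<open>hc_dist m \<delta> \<sigma>\<close> draws \<open>X\<close> uniformly from \<open>{0..<m}\<close> and \<open>Y \<in> {0,1}\<close> with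
  \<open>P(Y = 1 | X = j) = hc_eta \<delta> \<sigma> j = 1/2 \<plusminus> \<delta>\<close>, the sign_of given by \<open>\<sigma> j\<close>.\<close>

definition sign_of :: "bool \<Rightarrow> real" where "sign_of b = (if b then 1 else -1)"

definition hc_support :: "nat \<Rightarrow> (nat \<times> real) set" where "hc_support m = {..<m} \<times> {0,1}"

definition hc_weight :: "nat \<Rightarrow> real \<Rightarrow> (nat \<Rightarrow> bool) \<Rightarrow> nat \<times> real \<Rightarrow> real" where
  "hc_weight m \<delta> \<sigma> z = (if z \<in> hc_support m then (1/2 + \<delta> * sign_of (\<sigma> (fst z)) * (2 * snd z - 1)) / m else 0)"

definition hc_eta :: "real \<Rightarrow> (nat \<Rightarrow> bool) \<Rightarrow> nat \<Rightarrow> real" where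
  "hc_eta \<delta> \<sigma> j = 1/2 + \<delta> * sign_of (\<sigma> j)"

definition hc_pmf :: "nat \<Rightarrow> real \<Rightarrow> (nat \<Rightarrow> bool) \<Rightarrow> (nat \<times> real) pmf" where
  "hc_pmf m \<delta> \<sigma> = embed_pmf (hc_weight m \<delta> \<sigma>)"
definition hc_dist :: "nat \<Rightarrow> real \<Rightarrow> (nat \<Rightarrow> bool) \<Rightarrow> (nat \<times> real) measure" where
  "hc_dist m \<delta> \<sigma> = distr (measure_pmf (hc_pmf m \<delta> \<sigma>)) obs_space id"

lemma sign_of_sq[simp]: "sign_of b * sign_of b = 1" "\<bar>sign_of b\<bar> = 1" by (auto simp: sign_of_def)

lemma finite_hc_support[simp]: "finite (hc_support m)" by (simp add: hc_support_def)

lemma sum_hc_support: "(\<Sum>z\<in>hc_support m. g z) = (\<Sum>j<m. g (j,0) + g (j,1))"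
  unfolding hc_support_def by (simp add: sum.cartesian_product')

lemma mem_hc_support[simp]: "(j,y) \<in> hc_support m \<longleftrightarrow> j < m \<and> (y = 0 \<or> y = 1)"
  by (auto simp: hc_support_def)

lemma hc_weight_simps[simp]: "j < m \<Longrightarrow> hc_weight m \<delta> \<sigma> (j,0) = (1/2 - \<delta> * sign_of (\<sigma> j)) / m"
   "j < m \<Longrightarrow> hc_weight m \<delta> \<sigma> (j,1) = (1/2 + \<delta> * sign_of (\<sigma> j)) / m"
  by (auto simp: hc_weight_def)

lemma cell_sets: "{j} \<times> UNIV \<in> sets obs_space"
  by (auto intro!: pair_measureI)

lemma label_sets: "Y \<in> sets borel \<Longrightarrow> UNIV \<times> Y \<in> sets obs_space"
  by (auto intro!: pair_measureI)

lemma dists_mono: "dists {0,1} \<subseteq> dists {0..1}"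
proof
  fix M assume "M \<in> dists {0,1}"
  then have M: "prob_space M" "sets M = sets obs_space" "measure M (UNIV \<times> {0,1}) = 1"
    by (auto simp: dists_def)
  interpret prob_space M by fact
  have "1 = measure M (UNIV \<times> {0,1})" using M by simp
  also have "\<dots> \<le> measure M (UNIV \<times> {0..1})"
    using M(2) by (intro finite_measure_mono) (auto simp: label_sets)
  finally show "M \<in> dists {0..1}" using M prob_le_1[of "UNIV \<times> {0..1}"] by (auto simp: dists_def)
qed

text \<open>Admissible parameters: at least one cell and a bias keeping the weights nonnegative.\<close>

locale hypercube =
  fixes m :: nat and \<delta> :: real
  assumes m: "m > 0" and d0: "0 \<le> \<delta>" and d1: "\<delta> \<le> 1/2"
begin

lemma hc_weight_nonneg: "0 \<le> hc_weight m \<delta> \<sigma> z"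
proof -
  have "\<bar>\<delta> * sign_of (\<sigma> (fst z)) * (2 * snd z - 1)\<bar> \<le> 1/2" if "z \<in> hc_support m"
    using that d0 d1 by (auto simp: hc_support_def abs_mult)
  then show ?thesis unfolding hc_weight_def using m by (auto intro!: divide_nonneg_pos)
qed

lemma hc_weight_sum: "(\<Sum>z\<in>hc_support m. hc_weight m \<delta> \<sigma> z) = 1"
  using m by (simp add: sum_hc_support add_divide_distrib[symmetric] algebra_simps)

lemma pmf_hc_pmf: "pmf (hc_pmf m \<delta> \<sigma>) z = hc_weight m \<delta> \<sigma> z"
  unfolding hc_pmf_def
proof (rule pmf_embed_pmf)
  show "0 \<le> hc_weight m \<delta> \<sigma> x" for x by (rule hc_weight_nonneg)
  have "(\<integral>\<^sup>+ x. ennreal (hc_weight m \<delta> \<sigma> x) \<partial>count_space UNIV) = (\<Sum>z\<in>hc_support m. ennreal (hc_weight m \<delta> \<sigma> z))"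
    by (rule nn_integral_count_space') (auto simp: hc_weight_def)
  also have "\<dots> = 1" using hc_weight_sum hc_weight_nonneg by (simp add: sum_ennreal)
  finally show "(\<integral>\<^sup>+ x. ennreal (hc_weight m \<delta> \<sigma> x) \<partial>count_space UNIV) = 1" .
qed

lemma set_hc_pmf: "set_pmf (hc_pmf m \<delta> \<sigma>) \<subseteq> hc_support m"
  by (auto simp: set_pmf_eq pmf_hc_pmf hc_weight_def)

lemma sets_hc_dist[simp]: "sets (hc_dist m \<delta> \<sigma>) = sets obs_space"
  and space_hc_dist[simp]: "space (hc_dist m \<delta> \<sigma>) = UNIV"
  by (simp_all add: hc_dist_def)

lemma prob_hc_dist: "prob_space (hc_dist m \<delta> \<sigma>)"
  unfolding hc_dist_def
  by (intro prob_space.prob_space_distr measure_pmf.prob_space_axioms) (simp add: measurable_def)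

lemma integral_hc_dist:
  assumes f: "f \<in> borel_measurable obs_space"
  shows "(\<integral>z. f z \<partial>hc_dist m \<delta> \<sigma>) = (\<Sum>z\<in>hc_support m. f z * hc_weight m \<delta> \<sigma> z)"
proof -
  have "(\<integral>z. f z \<partial>hc_dist m \<delta> \<sigma>) = (\<integral>z. f z \<partial>measure_pmf (hc_pmf m \<delta> \<sigma>))"
    using f unfolding hc_dist_def by (subst integral_distr) (auto simp: measurable_def)
  also have "\<dots> = (\<Sum>z\<in>hc_support m. f z * pmf (hc_pmf m \<delta> \<sigma>) z)"
    by (rule integral_measure_pmf_real) (use set_hc_pmf in auto)
  finally show ?thesis by (simp add: pmf_hc_pmf)
qed

lemma measure_hc_dist:
  assumes A: "A \<in> sets obs_space"
  shows "measure (hc_dist m \<delta> \<sigma>) A = (\<Sum>z\<in>hc_support m. indicator A z * hc_weight m \<delta> \<sigma> z)"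
proof -
  interpret prob_space "hc_dist m \<delta> \<sigma>" by (rule prob_hc_dist)
  have "measure (hc_dist m \<delta> \<sigma>) A = (\<integral>z. indicator A z \<partial>hc_dist m \<delta> \<sigma>)"
    by simp
  also have "\<dots> = (\<Sum>z\<in>hc_support m. indicator A z * hc_weight m \<delta> \<sigma> z)"
    by (rule integral_hc_dist) (use A in measurable)
  finally show ?thesis .
qed

lemma hc_weight_cell: "x < m \<Longrightarrow> ennreal (hc_weight m \<delta> \<sigma> (x,0)) + ennreal (hc_weight m \<delta> \<sigma> (x,1)) = ennreal (1/m)"
  using hc_weight_nonneg[of \<sigma> "(x,0)"] hc_weight_nonneg[of \<sigma> "(x,1)"]
  by (subst ennreal_plus[symmetric]) (auto simp: add_divide_distrib[symmetric] simp del: ennreal_plus)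

lemma hc_dist_dists: "hc_dist m \<delta> \<sigma> \<in> dists {0,1}"
proof -
  have "measure (hc_dist m \<delta> \<sigma>) (UNIV \<times> {0,1}) = (\<Sum>z\<in>hc_support m. hc_weight m \<delta> \<sigma> z)"
    by (subst measure_hc_dist) (auto intro!: label_sets sum.cong simp: hc_support_def indicator_def)
  then show ?thesis unfolding dists_def using prob_hc_dist hc_weight_sum by auto
qed

lemma measure_cell: "measure (hc_dist m \<delta> \<sigma>) ({j} \<times> UNIV) = (if j < m then 1/m else 0)"
proof -
  have "measure (hc_dist m \<delta> \<sigma>) ({j} \<times> UNIV) = (\<Sum>k<m. if k = j then 1/m else 0)"
    unfolding measure_hc_dist[OF cell_sets] sum_hc_support
    by (rule sum.cong) (auto simp: indicator_def add_divide_distrib[symmetric])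
  then show ?thesis by simp
qed

lemma eta_hc_dist: "j < m \<Longrightarrow> eta (hc_dist m \<delta> \<sigma>) j = hc_eta \<delta> \<sigma> j"
proof -
  assume j: "j < m"
  have "(\<integral>z. snd z * indicator ({j} \<times> UNIV) z \<partial>hc_dist m \<delta> \<sigma>) = (\<Sum>k<m. if k = j then hc_eta \<delta> \<sigma> j / m else 0)"
    unfolding integral_hc_dist[OF borel_measurable_times[OF measurable_snd borel_measurable_indicator[OF cell_sets]]] sum_hc_support
    by (rule sum.cong) (auto simp: indicator_def hc_eta_def)
  then show ?thesis using j m unfolding eta_def measure_cell by simp
qed

lemma nn_integral_marg_hc: "(\<integral>\<^sup>+x. h x \<partial>marg (hc_dist m \<delta> \<sigma>)) = (\<Sum>j<m. ennreal (1/m) * h j)"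
proof -
  have "(\<integral>\<^sup>+x. h x \<partial>marg (hc_dist m \<delta> \<sigma>)) = (\<integral>\<^sup>+z. h (fst z) \<partial>measure_pmf (hc_pmf m \<delta> \<sigma>))"
  proof -
    have fm: "fst \<in> measurable (hc_dist m \<delta> \<sigma>) (count_space UNIV)"
      by (simp add: measurable_cong_sets[OF sets_hc_dist refl])
    have "(\<integral>\<^sup>+x. h x \<partial>marg (hc_dist m \<delta> \<sigma>)) = (\<integral>\<^sup>+z. h (fst z) \<partial>hc_dist m \<delta> \<sigma>)"
      unfolding marg_def by (rule nn_integral_distr[OF fm]) simp
    also have "\<dots> = (\<integral>\<^sup>+z. h (fst z) \<partial>measure_pmf (hc_pmf m \<delta> \<sigma>))"
    proof -
      have hm: "(\<lambda>z. h (fst z)) \<in> borel_measurable obs_space"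
        by (rule measurable_compose[OF measurable_fst]) simp
      show ?thesis unfolding hc_dist_def using hm by (subst nn_integral_distr) (auto simp: measurable_def)
    qed
    finally show ?thesis .
  qed
  also have "\<dots> = (\<Sum>z\<in>hc_support m. h (fst z) * ennreal (hc_weight m \<delta> \<sigma> z))"
    unfolding nn_integral_measure_pmf
    by (subst nn_integral_count_space'[of "hc_support m"]) (auto simp: pmf_hc_pmf hc_weight_def mult.commute)
  also have "\<dots> = (\<Sum>j<m. ennreal (1/m) * h j)"
    unfolding sum_hc_support by (rule sum.cong) (auto simp: distrib_left[symmetric] hc_weight_cell mult.commute simp del: hc_weight_simps)
  finally show ?thesis .
qed

end

lemma exists_ge_average:
  fixes f :: "'a \<Rightarrow> real"
  assumes "finite A" "A \<noteq> {}" "real (card A) * L \<le> (\<Sum>a\<in>A. f a)"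
  shows "\<exists>a\<in>A. L \<le> f a"
proof (rule ccontr)
  assume "\<not> ?thesis"
  then have "\<And>a. a \<in> A \<Longrightarrow> f a < L" by auto
  then have "(\<Sum>a\<in>A. f a) < real (card A) * L"
    using assms by (intro sum_bounded_above_strict) (auto simp: card_gt_0_iff)
  then show False using assms by simp
qed

definition hc_samples :: "nat \<Rightarrow> nat \<Rightarrow> (nat \<Rightarrow> nat \<times> real) set" where
  "hc_samples n m = PiE {..<n} (\<lambda>_. hc_support m)"

definition sample_weight :: "nat \<Rightarrow> nat \<Rightarrow> real \<Rightarrow> (nat \<Rightarrow> bool) \<Rightarrow> (nat \<Rightarrow> nat \<times> real) \<Rightarrow> real" where
  "sample_weight n m \<delta> \<sigma> D = (\<Prod>i<n. hc_weight m \<delta> \<sigma> (D i))"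

definition sign_vectors :: "nat \<Rightarrow> (nat \<Rightarrow> bool) set" where "sign_vectors m = PiE {..<m} (\<lambda>_. UNIV)"

definition flip :: "nat \<Rightarrow> (nat \<Rightarrow> bool) \<Rightarrow> (nat \<Rightarrow> bool)" where "flip j \<sigma> = \<sigma>(j := \<not> \<sigma> j)"

definition overlap :: "nat \<Rightarrow> nat \<Rightarrow> real \<Rightarrow> (nat \<Rightarrow> bool) \<Rightarrow> nat \<Rightarrow> real" where
  "overlap n m \<delta> \<sigma> j =
     (\<Sum>D\<in>hc_samples n m. min (sample_weight n m \<delta> \<sigma> D) (sample_weight n m \<delta> (flip j \<sigma>) D))"

definition coord_risk :: "nat \<Rightarrow> nat \<Rightarrow> real \<Rightarrow> ((nat \<Rightarrow> nat \<times> real) \<Rightarrow> nat \<Rightarrow> real) \<Rightarrow> nat \<Rightarrow> (nat \<Rightarrow> bool) \<Rightarrow> real" where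
  "coord_risk n m \<delta> a j \<sigma> = (\<Sum>D\<in>hc_samples n m. sample_weight n m \<delta> \<sigma> D * (a D j - hc_eta \<delta> \<sigma> j)^2)"

definition hc_risk :: "nat \<Rightarrow> nat \<Rightarrow> real \<Rightarrow> ((nat \<Rightarrow> nat \<times> real) \<Rightarrow> nat \<Rightarrow> real) \<Rightarrow> (nat \<Rightarrow> bool) \<Rightarrow> real" where
  "hc_risk n m \<delta> a \<sigma> = (\<Sum>D\<in>hc_samples n m. sample_weight n m \<delta> \<sigma> D * ((\<Sum>j<m. (a D j - hc_eta \<delta> \<sigma> j)^2) / m))"

lemma finite_hc_samples[simp]: "finite (hc_samples n m)" by (simp add: hc_samples_def finite_PiE)
lemma finite_sign_vectors[simp]: "finite (sign_vectors m)" by (simp add: sign_vectors_def finite_PiE)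
lemma sign_vectors_ne: "sign_vectors m \<noteq> {}" by (simp add: sign_vectors_def PiE_eq_empty_iff)

lemma two_point_ineq:
  fixes w w' a t t' :: real
  assumes "0 \<le> w" "0 \<le> w'"
  shows "min w w' * (t - t')^2 / 2 \<le> w * (a - t)^2 + w' * (a - t')^2"
proof -
  have "(t - t')^2 / 2 \<le> (a - t)^2 + (a - t')^2"
  proof -
    have "0 \<le> (2*a - t - t')^2" by simp
    then show ?thesis by (simp add: power2_eq_square field_simps)
  qed
  then have "min w w' * ((t - t')^2 / 2) \<le> min w w' * ((a - t)^2 + (a - t')^2)"
    using assms by (intro mult_left_mono) auto
  also have "\<dots> \<le> w * (a - t)^2 + w' * (a - t')^2"
    by (simp add: distrib_left add_mono mult_right_mono)
  finally show ?thesis by simp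
qed

lemma flip_bij: "j < m \<Longrightarrow> bij_betw (flip j) (sign_vectors m) (sign_vectors m)"
proof -
  assume j: "j < m"
  have ff: "flip j (flip j \<sigma>) = \<sigma>" for \<sigma> by (auto simp: flip_def fun_eq_iff)
  have im: "flip j ` sign_vectors m \<subseteq> sign_vectors m"
    using j by (auto simp: flip_def sign_vectors_def PiE_def extensional_def)
  show ?thesis by (rule bij_betw_byWitness[of _ "flip j"]) (use ff im in auto)
qed

lemma hc_eta_flip: "(hc_eta \<delta> \<sigma> j - hc_eta \<delta> (flip j \<sigma>) j)^2 = 4 * \<delta>^2"
  by (auto simp: hc_eta_def flip_def sign_of_def power2_eq_square algebra_simps)

context hypercube begin

lemma sample_weight_nonneg: "0 \<le> sample_weight n m \<delta> \<sigma> D"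
  unfolding sample_weight_def by (intro prod_nonneg) (simp add: hc_weight_nonneg)

text \<open>Flipping cell \<open>j\<close> moves \<open>\<eta>\<close> by \<open>2\<delta>\<close> there, so the pair \<open>\<sigma>, flip j \<sigma>\<close> jointly incurs
  cell-\<open>j\<close> risk at least \<open>2 \<delta>\<^sup>2\<close> times their overlap.\<close>

lemma coord_risk_pair:
  assumes L: "L \<le> overlap n m \<delta> \<sigma> j"
  shows "2 * \<delta>^2 * L \<le> coord_risk n m \<delta> a j \<sigma> + coord_risk n m \<delta> a j (flip j \<sigma>)"
proof -
  have "2 * \<delta>^2 * L \<le> (\<Sum>D\<in>hc_samples n m. min (sample_weight n m \<delta> \<sigma> D) (sample_weight n m \<delta> (flip j \<sigma>) D) * (4 * \<delta>^2) / 2)"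
  proof -
    have "(\<Sum>D\<in>hc_samples n m. min (sample_weight n m \<delta> \<sigma> D) (sample_weight n m \<delta> (flip j \<sigma>) D) * (4 * \<delta>^2) / 2)
        = 2 * \<delta>^2 * overlap n m \<delta> \<sigma> j"
      by (simp add: overlap_def sum_distrib_left mult_ac)
    then show ?thesis using L by (simp add: mult_left_mono)
  qed
  also have "\<dots> \<le> coord_risk n m \<delta> a j \<sigma> + coord_risk n m \<delta> a j (flip j \<sigma>)"
    unfolding coord_risk_def sum.distrib[symmetric]
  proof (rule sum_mono)
    fix D
    have "min (sample_weight n m \<delta> \<sigma> D) (sample_weight n m \<delta> (flip j \<sigma>) D) * (hc_eta \<delta> \<sigma> j - hc_eta \<delta> (flip j \<sigma>) j)^2 / 2
       \<le> sample_weight n m \<delta> \<sigma> D * (a D j - hc_eta \<delta> \<sigma> j)^2 + sample_weight n m \<delta> (flip j \<sigma>) D * (a D j - hc_eta \<delta> (flip j \<sigma>) j)^2"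
      by (rule two_point_ineq[OF sample_weight_nonneg sample_weight_nonneg])
    then show "min (sample_weight n m \<delta> \<sigma> D) (sample_weight n m \<delta> (flip j \<sigma>) D) * (4 * \<delta>^2) / 2
       \<le> sample_weight n m \<delta> \<sigma> D * (a D j - hc_eta \<delta> \<sigma> j)^2 + sample_weight n m \<delta> (flip j \<sigma>) D * (a D j - hc_eta \<delta> (flip j \<sigma>) j)^2"
      by (simp only: hc_eta_flip)
  qed
  finally show ?thesis .
qed

lemma coord_risk_average:
  assumes j: "j < m" and L: "\<And>\<sigma>. L \<le> overlap n m \<delta> \<sigma> j"
  shows "card (sign_vectors m) * \<delta>^2 * L \<le> (\<Sum>\<sigma>\<in>sign_vectors m. coord_risk n m \<delta> a j \<sigma>)"
proof -
  have "(\<Sum>\<sigma>\<in>sign_vectors m. coord_risk n m \<delta> a j (flip j \<sigma>)) = (\<Sum>\<sigma>\<in>sign_vectors m. coord_risk n m \<delta> a j \<sigma>)"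
    by (rule sum.reindex_bij_betw[OF flip_bij[OF j]])
  moreover have "(\<Sum>\<sigma>\<in>sign_vectors m. 2 * \<delta>^2 * L) \<le> (\<Sum>\<sigma>\<in>sign_vectors m. coord_risk n m \<delta> a j \<sigma> + coord_risk n m \<delta> a j (flip j \<sigma>))"
    by (rule sum_mono) (rule coord_risk_pair[OF L])
  ultimately show ?thesis by (simp add: sum.distrib)
qed

lemma assouad:
  assumes L: "\<And>\<sigma> j. j < m \<Longrightarrow> L \<le> overlap n m \<delta> \<sigma> j"
  shows "card (sign_vectors m) * \<delta>^2 * L \<le> (\<Sum>\<sigma>\<in>sign_vectors m. hc_risk n m \<delta> a \<sigma>)"
proof -
  have "(\<Sum>\<sigma>\<in>sign_vectors m. hc_risk n m \<delta> a \<sigma>) = (\<Sum>j<m. \<Sum>\<sigma>\<in>sign_vectors m. coord_risk n m \<delta> a j \<sigma>) / m"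
  proof -
    have "hc_risk n m \<delta> a \<sigma> = (\<Sum>j<m. coord_risk n m \<delta> a j \<sigma>) / m" for \<sigma>
    proof -
      have "hc_risk n m \<delta> a \<sigma> = (\<Sum>D\<in>hc_samples n m. (\<Sum>j<m. sample_weight n m \<delta> \<sigma> D * (a D j - hc_eta \<delta> \<sigma> j)^2) / m)"
        unfolding hc_risk_def by (rule sum.cong) (auto simp: sum_distrib_left)
      also have "\<dots> = (\<Sum>D\<in>hc_samples n m. \<Sum>j<m. sample_weight n m \<delta> \<sigma> D * (a D j - hc_eta \<delta> \<sigma> j)^2) / m"
        by (rule sum_divide_distrib[symmetric])
      also have "\<dots> = (\<Sum>j<m. coord_risk n m \<delta> a j \<sigma>) / m"
        unfolding coord_risk_def by (subst sum.swap) simp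
      finally show ?thesis .
    qed
    then have "(\<Sum>\<sigma>\<in>sign_vectors m. hc_risk n m \<delta> a \<sigma>) = (\<Sum>\<sigma>\<in>sign_vectors m. \<Sum>j<m. coord_risk n m \<delta> a j \<sigma>) / m"
      by (simp add: sum_divide_distrib)
    then show ?thesis by (subst (asm) sum.swap)
  qed
  also have "\<dots> \<ge> (\<Sum>j<m. card (sign_vectors m) * \<delta>^2 * L) / m"
    using m by (intro divide_right_mono sum_mono coord_risk_average L) auto
  finally show ?thesis using m by simp
qed

lemma assouad_sign:
  assumes L: "\<And>\<sigma> j. j < m \<Longrightarrow> L \<le> overlap n m \<delta> \<sigma> j"
  obtains \<sigma> where "\<delta>^2 * L \<le> hc_risk n m \<delta> a \<sigma>"
proof -
  have "real (card (sign_vectors m)) * (\<delta>^2 * L) \<le> (\<Sum>\<sigma>\<in>sign_vectors m. hc_risk n m \<delta> a \<sigma>)"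
    using assouad[OF L] by (simp add: mult.assoc)
  then show ?thesis
    using exists_ge_average[OF finite_sign_vectors sign_vectors_ne] that by blast
qed

lemma hc_risk_nonneg: "0 \<le> hc_risk n m \<delta> a \<sigma>"
  unfolding hc_risk_def
  by (auto intro!: mult_nonneg_nonneg divide_nonneg_nonneg sample_weight_nonneg sum_nonneg
      simp del: times_divide_eq_right)

end

text \<open>Lower bounds on the overlap, via the Hellinger affinity
  \<open>\<Sum>D. sqrt (w\<^sub>\<sigma> D * w\<^sub>\<sigma>' D)\<close>, which factorises over the \<open>n\<close> observations.\<close>

lemma sqrt_prod: "finite A \<Longrightarrow> sqrt (\<Prod>i\<in>A. f i) = (\<Prod>i\<in>A. sqrt (f i))"
  by (induction A rule: finite_induct) (auto simp: real_sqrt_mult)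

context hypercube begin

lemma sum_sample_weight: "(\<Sum>D\<in>hc_samples n m. sample_weight n m \<delta> \<sigma> D) = 1"
proof -
  have "(\<Prod>i<n. \<Sum>z\<in>hc_support m. hc_weight m \<delta> \<sigma> z) = (\<Sum>D\<in>hc_samples n m. sample_weight n m \<delta> \<sigma> D)"
    unfolding hc_samples_def sample_weight_def by (rule prod_sum_PiE) auto
  then show ?thesis using hc_weight_sum by simp
qed

lemma cell_pair_affinity:
  assumes k: "k < m"
  shows "sqrt (hc_weight m \<delta> \<sigma> (k,0) * hc_weight m \<delta> (flip j \<sigma>) (k,0)) + sqrt (hc_weight m \<delta> \<sigma> (k,1) * hc_weight m \<delta> (flip j \<sigma>) (k,1))
       = (if k = j then sqrt (1 - 4*\<delta>^2) / m else 1/m)"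
proof (cases "k = j")
  case True
  have sgf: "sign_of (flip j \<sigma> j) = - sign_of (\<sigma> j)" by (simp add: flip_def sign_of_def)
  have e1: "(1/2 - u * v) * (1/2 + u * v) = 1/4 - u * u * (v * v)" for u v :: real by algebra
  have e2: "(1/2 + u * v) * (1/2 - u * v) = 1/4 - u * u * (v * v)" for u v :: real by algebra
  have "(1/2 - \<delta> * sign_of (\<sigma> j)) * (1/2 + \<delta> * sign_of (\<sigma> j)) = (1 - 4*\<delta>^2)/4"
    unfolding e1 sign_of_sq by (simp add: power2_eq_square)
  moreover have "(1/2 + \<delta> * sign_of (\<sigma> j)) * (1/2 - \<delta> * sign_of (\<sigma> j)) = (1 - 4*\<delta>^2)/4"
    unfolding e2 sign_of_sq by (simp add: power2_eq_square)
  note E = this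
  have q: "sqrt (((1 - 4*\<delta>^2)/4) / (real m * real m)) = sqrt (1 - 4*\<delta>^2) / (2*m)"
    by (simp add: real_sqrt_divide real_sqrt_mult)
  have "hc_weight m \<delta> \<sigma> (k,0) * hc_weight m \<delta> (flip j \<sigma>) (k,0) = ((1 - 4*\<delta>^2)/4) / (real m * real m)"
     "hc_weight m \<delta> \<sigma> (k,1) * hc_weight m \<delta> (flip j \<sigma>) (k,1) = ((1 - 4*\<delta>^2)/4) / (real m * real m)"
    using True k sgf E by (simp_all add: divide_simps mult.commute)
  then have "sqrt (hc_weight m \<delta> \<sigma> (k,0) * hc_weight m \<delta> (flip j \<sigma>) (k,0)) = sqrt (1 - 4*\<delta>^2) / (2*m)"
     "sqrt (hc_weight m \<delta> \<sigma> (k,1) * hc_weight m \<delta> (flip j \<sigma>) (k,1)) = sqrt (1 - 4*\<delta>^2) / (2*m)"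
    using q by simp_all
  then show ?thesis using True by simp
next
  case False
  then have "flip j \<sigma> k = \<sigma> k" by (simp add: flip_def)
  then have "sqrt (hc_weight m \<delta> \<sigma> (k,0) * hc_weight m \<delta> (flip j \<sigma>) (k,0)) = hc_weight m \<delta> \<sigma> (k,0)"
    "sqrt (hc_weight m \<delta> \<sigma> (k,1) * hc_weight m \<delta> (flip j \<sigma>) (k,1)) = hc_weight m \<delta> \<sigma> (k,1)"
  proof -
    assume fk: "flip j \<sigma> k = \<sigma> k"
    have "hc_weight m \<delta> (flip j \<sigma>) (k,y) = hc_weight m \<delta> \<sigma> (k,y)" for y using fk by (auto simp: hc_weight_def)
    then show "sqrt (hc_weight m \<delta> \<sigma> (k,0) * hc_weight m \<delta> (flip j \<sigma>) (k,0)) = hc_weight m \<delta> \<sigma> (k,0)"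
      "sqrt (hc_weight m \<delta> \<sigma> (k,1) * hc_weight m \<delta> (flip j \<sigma>) (k,1)) = hc_weight m \<delta> \<sigma> (k,1)"
      by (simp_all add: hc_weight_nonneg del: hc_weight_simps)
  qed
  then show ?thesis using False k m by (simp add: add_divide_distrib[symmetric])
qed

lemma cell_affinity:
  assumes j: "j < m"
  shows "(\<Sum>z\<in>hc_support m. sqrt (hc_weight m \<delta> \<sigma> z * hc_weight m \<delta> (flip j \<sigma>) z)) = 1 - (1 - sqrt (1 - 4*\<delta>^2)) / m"
proof -
  have "(\<Sum>z\<in>hc_support m. sqrt (hc_weight m \<delta> \<sigma> z * hc_weight m \<delta> (flip j \<sigma>) z)) = (\<Sum>k<m. if k = j then sqrt (1 - 4*\<delta>^2) / m else 1/m)"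
    unfolding sum_hc_support by (rule sum.cong) (auto simp del: hc_weight_simps simp: cell_pair_affinity)
  also have "\<dots> = sqrt (1 - 4*\<delta>^2) / m + (m - 1) / m"
  proof -
    have "{x. x < m} \<inter> - {j} = {..<m} - {j}" by auto
    then have "card ({x. x < m} \<inter> - {j}) = m - 1" using j by (simp add: card_Diff_singleton)
    then show ?thesis using j m by (simp add: sum.If_cases Int_absorb1 lessThan_def of_nat_diff)
  qed
  also have "\<dots> = 1 - (1 - sqrt (1 - 4*\<delta>^2)) / m"
    using m by (simp add: field_simps)
  finally show ?thesis .
qed

lemma affinity_samples:
  assumes j: "j < m"
  shows "(\<Sum>D\<in>hc_samples n m. sqrt (sample_weight n m \<delta> \<sigma> D * sample_weight n m \<delta> (flip j \<sigma>) D)) = (1 - (1 - sqrt (1 - 4*\<delta>^2)) / m) ^ n"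
proof -
  have "(\<Sum>D\<in>hc_samples n m. sqrt (sample_weight n m \<delta> \<sigma> D * sample_weight n m \<delta> (flip j \<sigma>) D))
      = (\<Sum>D\<in>hc_samples n m. \<Prod>i<n. sqrt (hc_weight m \<delta> \<sigma> (D i) * hc_weight m \<delta> (flip j \<sigma>) (D i)))"
    unfolding sample_weight_def by (simp add: prod.distrib[symmetric] sqrt_prod)
  also have "\<dots> = (\<Prod>i<n. \<Sum>z\<in>hc_support m. sqrt (hc_weight m \<delta> \<sigma> z * hc_weight m \<delta> (flip j \<sigma>) z))"
    unfolding hc_samples_def by (rule prod_sum_PiE[symmetric]) auto
  finally show ?thesis using cell_affinity[OF j] by simp
qed

text \<open>Le Cam's inequality: the overlap is at least half the squared affinity (Cauchy-Schwarz).\<close>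

lemma overlap_ge_affinity:
  assumes j: "j < m"
  shows "((1 - (1 - sqrt (1 - 4*\<delta>^2)) / m) ^ n)^2 / 2 \<le> overlap n m \<delta> \<sigma> j"
proof -
  define a where "a D = sample_weight n m \<delta> \<sigma> D" for D
  define b where "b D = sample_weight n m \<delta> (flip j \<sigma>) D" for D
  have a0: "0 \<le> a D" and b0: "0 \<le> b D" for D by (simp_all add: a_def b_def sample_weight_nonneg)
  have eq: "(\<Sum>D\<in>hc_samples n m. sqrt (a D * b D)) = (\<Sum>D\<in>hc_samples n m. sqrt (min (a D) (b D)) * sqrt (max (a D) (b D)))"
    by (rule sum.cong) (auto simp: real_sqrt_mult[symmetric] min_def max_def mult.commute)
  have "(\<Sum>D\<in>hc_samples n m. sqrt (min (a D) (b D)) * sqrt (max (a D) (b D)))^2 \<le> (\<Sum>D\<in>hc_samples n m. (sqrt (min (a D) (b D)))^2) * (\<Sum>D\<in>hc_samples n m. (sqrt (max (a D) (b D)))^2)"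
    by (rule Cauchy_Schwarz_ineq_sum)
  then have "(\<Sum>D\<in>hc_samples n m. sqrt (a D * b D))^2 \<le> (\<Sum>D\<in>hc_samples n m. (sqrt (min (a D) (b D)))^2) * (\<Sum>D\<in>hc_samples n m. (sqrt (max (a D) (b D)))^2)"
    by (simp only: eq)
  also have "\<dots> = (\<Sum>D\<in>hc_samples n m. min (a D) (b D)) * (\<Sum>D\<in>hc_samples n m. max (a D) (b D))"
  proof -
    have sq1: "(sqrt (min (a D) (b D)))^2 = min (a D) (b D)" "(sqrt (max (a D) (b D)))^2 = max (a D) (b D)" for D
      using a0[of D] b0[of D] by (auto intro: real_sqrt_pow2)
    show ?thesis by (simp only: sq1)
  qed
  also have "\<dots> \<le> (\<Sum>D\<in>hc_samples n m. min (a D) (b D)) * 2"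
  proof (rule mult_left_mono)
    have "(\<Sum>D\<in>hc_samples n m. max (a D) (b D)) \<le> (\<Sum>D\<in>hc_samples n m. a D + b D)"
      using a0 b0 by (intro sum_mono) auto
    also have "\<dots> = 2" by (simp add: sum.distrib a_def b_def sum_sample_weight)
    finally show "(\<Sum>D\<in>hc_samples n m. max (a D) (b D)) \<le> 2" .
    show "0 \<le> (\<Sum>D\<in>hc_samples n m. min (a D) (b D))" using a0 b0 by (intro sum_nonneg) auto
  qed
  finally show ?thesis using affinity_samples[OF j] by (simp add: a_def b_def overlap_def)
qed

end

text \<open>Noiseless case \<open>\<delta> = 1/2\<close>: the two sample laws agree unless some observation falls into
  cell \<open>j\<close>, so the overlap is at least \<open>(1 - 1/m)^n \<ge> 1 - n/m\<close>.\<close>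

lemma overlap_full_bias:
  assumes m: "m > 0" and j: "j < m"
  shows "1 - real n / m \<le> overlap n m (1/2) \<sigma> j"
proof -
  interpret hypercube m "1/2" using m by unfold_locales auto
  have w01: "hc_weight m (1/2) \<tau> z = 0 \<or> hc_weight m (1/2) \<tau> z = 1/m" for \<tau> z
    by (cases "z \<in> hc_support m") (auto simp: hc_weight_def hc_support_def sign_of_def)
  have W01: "sample_weight n m (1/2) \<tau> D = 0 \<or> sample_weight n m (1/2) \<tau> D = (1/m)^n" for \<tau> D
  proof (cases "\<exists>i<n. hc_weight m (1/2) \<tau> (D i) = 0")
    case True then show ?thesis by (auto simp: sample_weight_def)
  next
    case False
    then have "sample_weight n m (1/2) \<tau> D = (\<Prod>i<n. 1/m)" unfolding sample_weight_def
      by (intro prod.cong) (use w01 in blast)+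
    then show ?thesis by simp
  qed
  have "overlap n m (1/2) \<sigma> j
     = (\<Sum>D\<in>hc_samples n m. sqrt (sample_weight n m (1/2) \<sigma> D * sample_weight n m (1/2) (flip j \<sigma>) D))"
    unfolding overlap_def
  proof (rule sum.cong[OF refl])
    fix D
    show "min (sample_weight n m (1/2) \<sigma> D) (sample_weight n m (1/2) (flip j \<sigma>) D) = sqrt (sample_weight n m (1/2) \<sigma> D * sample_weight n m (1/2) (flip j \<sigma>) D)"
      using W01[of \<sigma> D] W01[of "flip j \<sigma>" D] by (auto simp: real_sqrt_mult)
  qed
  also have "\<dots> = (1 - 1/m)^n" using affinity_samples[OF j] by (simp add: power2_eq_square)
  also have "\<dots> \<ge> 1 - real n / m"
    using Bernoulli_inequality[of "-1/m" n] m by simp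
  finally show ?thesis .
qed

lemma overlap_bounded_bias:
  assumes "hypercube m \<delta>" and j: "j < m" and small: "4 * real n * \<delta>^2 \<le> m / 2"
  shows "1/8 \<le> overlap n m \<delta> \<sigma> j"
proof -
  interpret hypercube m \<delta> by fact
  define x where "x = (1 - sqrt (1 - 4*\<delta>^2)) / m"
  have "\<delta>^2 \<le> (1/2)^2" using d0 d1 by (intro power_mono) auto
  then have u: "0 \<le> 4*\<delta>^2" "4*\<delta>^2 \<le> 1" by (auto simp: power2_eq_square)
  have "1 - 4*\<delta>^2 \<le> sqrt (1 - 4*\<delta>^2)"
    using u by (intro real_le_rsqrt) (auto simp: power2_eq_square intro: mult_left_le_one_le)
  then have x1: "x \<le> 4*\<delta>^2/m" unfolding x_def using m by (simp add: divide_right_mono)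
  have "4*\<delta>^2/m \<le> 4*\<delta>^2" using m u by (simp add: divide_le_eq mult_le_cancel_left1)
  then have "x \<le> 1" using x1 u by linarith
  have "1/2 \<le> 1 - real n * x"
  proof -
    have "real n * x \<le> real n * (4*\<delta>^2/m)" by (rule mult_left_mono[OF x1]) simp
    also have "\<dots> = 4 * real n * \<delta>^2 / m" by simp
    also have "\<dots> \<le> 1/2" using small m by (simp add: divide_le_eq)
    finally show ?thesis by simp
  qed
  also have "\<dots> \<le> (1 - x)^n" using Bernoulli_inequality[of "-x" n] \<open>x \<le> 1\<close> by simp
  finally have "1/2 \<le> (1 - x)^n" .
  then have "(1/2)^2 \<le> ((1 - x)^n)^2" by (intro power_mono) auto
  then have "1/8 \<le> ((1 - x)^n)^2 / 2" by (simp add: power2_eq_square)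
  also have "\<dots> \<le> overlap n m \<delta> \<sigma> j"
    using overlap_ge_affinity[OF j] unfolding x_def by simp
  finally show ?thesis .
qed

context hypercube begin

lemma sqdist_hc_dist: "sqdist (hc_dist m \<delta> \<sigma>) f g = ennreal ((\<Sum>j<m. (f j - g j)^2) / m)"
proof -
  have "sqdist (hc_dist m \<delta> \<sigma>) f g = (\<Sum>j<m. ennreal (1/m) * ennreal ((f j - g j)^2))"
    unfolding sqdist_def by (rule nn_integral_marg_hc)
  also have "\<dots> = (\<Sum>j<m. ennreal ((f j - g j)^2 / m))"
    by (rule sum.cong) (auto simp: ennreal_mult[symmetric])
  also have "\<dots> = ennreal (\<Sum>j<m. (f j - g j)^2 / m)"
    by (rule sum_ennreal) auto
  finally show ?thesis by (simp add: sum_divide_distrib)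
qed

lemma sqdist_eta: "sqdist (hc_dist m \<delta> \<sigma>) f (eta (hc_dist m \<delta> \<sigma>)) = ennreal ((\<Sum>j<m. (f j - hc_eta \<delta> \<sigma> j)^2) / m)"
  unfolding sqdist_hc_dist by (simp add: eta_hc_dist)

lemma risk_hc_dist:
  assumes fh: "fh \<in> estimators n"
  shows "risk n (hc_dist m \<delta> \<sigma>) fh = ennreal (hc_risk n m \<delta> fh \<sigma>)"
proof -
  have [measurable]: "(\<lambda>D. fh D j) \<in> borel_measurable (PiM {..<n} (\<lambda>_. obs_space))" for j
    using fh by (simp add: estimators_def sample_space_def)
  have meas: "(\<lambda>D. ennreal ((\<Sum>j<m. (fh D j - hc_eta \<delta> \<sigma> j)^2) / m)) \<in> borel_measurable (PiM {..<n} (\<lambda>_. obs_space))"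
    by measurable
  have "risk n (hc_dist m \<delta> \<sigma>) fh = (\<integral>\<^sup>+D. ennreal ((\<Sum>j<m. (fh D j - hc_eta \<delta> \<sigma> j)^2) / m) \<partial>PiM {..<n} (\<lambda>_. hc_dist m \<delta> \<sigma>))"
    unfolding risk_def sqdist_eta ..
  also have "\<dots> = (\<Sum>D\<in>hc_samples n m. (\<Prod>i<n. ennreal (pmf (hc_pmf m \<delta> \<sigma>) (D i))) * ennreal ((\<Sum>j<m. (fh D j - hc_eta \<delta> \<sigma> j)^2) / m))"
    unfolding hc_dist_def hc_samples_def by (rule nn_integral_PiM_pmf[OF _ _ set_hc_pmf meas]) auto
  also have "\<dots> = (\<Sum>D\<in>hc_samples n m. ennreal (sample_weight n m \<delta> \<sigma> D * ((\<Sum>j<m. (fh D j - hc_eta \<delta> \<sigma> j)^2) / m)))"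
  proof (rule sum.cong[OF refl])
    fix D
    have A: "0 \<le> sample_weight n m \<delta> \<sigma> D" by (rule sample_weight_nonneg)
    have B: "0 \<le> (\<Sum>j<m. (fh D j - hc_eta \<delta> \<sigma> j)^2) / m" by (intro divide_nonneg_nonneg sum_nonneg) auto
    have "(\<Prod>i<n. ennreal (pmf (hc_pmf m \<delta> \<sigma>) (D i))) = ennreal (sample_weight n m \<delta> \<sigma> D)"
      by (simp add: pmf_hc_pmf sample_weight_def prod_ennreal hc_weight_nonneg)
    then show "(\<Prod>i<n. ennreal (pmf (hc_pmf m \<delta> \<sigma>) (D i))) * ennreal ((\<Sum>j<m. (fh D j - hc_eta \<delta> \<sigma> j)^2) / m)
      = ennreal (sample_weight n m \<delta> \<sigma> D * ((\<Sum>j<m. (fh D j - hc_eta \<delta> \<sigma> j)^2) / m))"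
      by (simp only: ennreal_mult[OF A B])
  qed
  also have "\<dots> = ennreal (hc_risk n m \<delta> fh \<sigma>)"
    unfolding hc_risk_def by (rule sum_ennreal) (auto intro!: mult_nonneg_nonneg divide_nonneg_nonneg sample_weight_nonneg sum_nonneg simp del: times_divide_eq_right)
  finally show ?thesis .
qed

lemma eta_in_hc_dist:
  assumes b: "\<And>j. j < m \<Longrightarrow> 2 * \<delta> \<le> real (Suc j) powr (-1 / p)"
  shows "eta_in (hc_dist m \<delta> \<sigma>) (Fcls p)"
proof -
  define g where "g j = (if j < m then 2 * \<delta> * sign_of (\<sigma> j) else 0)" for j
  define f where "f j = (1 + g j) / 2" for j
  have "g \<in> Bp p" unfolding Bp_def g_def using b d0 by (auto simp: abs_mult)
  then have "f \<in> Fcls p" unfolding Fcls_def f_def by auto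
  moreover have "f x = eta (hc_dist m \<delta> \<sigma>) x" if "measure (hc_dist m \<delta> \<sigma>) ({x} \<times> UNIV) > 0" for x
  proof -
    have "x < m" using that by (simp add: measure_cell split: if_splits)
    then show ?thesis by (simp add: eta_hc_dist f_def g_def hc_eta_def)
  qed
  ultimately show ?thesis unfolding eta_in_def by blast
qed

end

text \<open>The oracle for part (c): in the noiseless hypercube, \<open>fs \<sigma>\<close> follows the signs of \<open>\<sigma>\<close> as far
  as the envelope of \<open>Fcls p\<close> allows; its approximation error is explicit.\<close>

lemma hc_oracle:
  assumes m: "m > 0" and p: "p > 0"
  defines "b \<equiv> \<lambda>j. real (Suc j) powr (-1/p)"
  defines "fs \<equiv> \<lambda>\<sigma> j. (1 + (if j < m then b j * sign_of (\<sigma> j) else 0)) / 2"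
  shows "fs \<sigma> \<in> Fcls p"
    and "sqdist (hc_dist m (1/2) \<sigma>) (fs \<sigma>) (eta (hc_dist m (1/2) \<sigma>)) = ennreal ((\<Sum>j<m. (1 - b j)^2) / (4*m))"
proof -
  interpret hypercube m "1/2" using m by unfold_locales auto
  define g where "g j = (if j < m then b j * sign_of (\<sigma> j) else 0)" for j
  have "g \<in> Bp p" unfolding Bp_def g_def b_def by (auto simp: abs_mult)
  then show "fs \<sigma> \<in> Fcls p" unfolding Fcls_def fs_def g_def by auto
  have h: "(fs \<sigma> j - hc_eta (1/2) \<sigma> j)^2 = (1 - b j)^2 / 4" if "j < m" for j
    using that unfolding fs_def hc_eta_def sign_of_def by (auto simp: power2_eq_square field_simps)
  have "(fs \<sigma> j - hc_eta (1/2) \<sigma> j)^2 / m = (1 - b j)^2 / (4*m)" if "j < m" for j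
    unfolding h[OF that] by simp
  then have "(\<Sum>j<m. (fs \<sigma> j - hc_eta (1/2) \<sigma> j)^2 / m) = (\<Sum>j<m. (1 - b j)^2 / (4*m))"
    by (intro sum.cong) auto
  then show "sqdist (hc_dist m (1/2) \<sigma>) (fs \<sigma>) (eta (hc_dist m (1/2) \<sigma>)) = ennreal ((\<Sum>j<m. (1 - b j)^2) / (4*m))"
    unfolding sqdist_eta by (simp add: sum_divide_distrib)
qed


lemma nat_floor_between:
  assumes "1 \<le> X"
  shows "X/2 \<le> real (nat \<lfloor>X\<rfloor>)" and "real (nat \<lfloor>X\<rfloor>) \<le> X"
proof -
  have "X - 1 < of_int \<lfloor>X\<rfloor>" by linarith
  moreover have "1 \<le> real_of_int \<lfloor>X\<rfloor>" using assms by simp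
  moreover have "real (nat \<lfloor>X\<rfloor>) = real_of_int \<lfloor>X\<rfloor>" using assms by simp
  ultimately show "X/2 \<le> real (nat \<lfloor>X\<rfloor>)" by linarith
  show "real (nat \<lfloor>X\<rfloor>) \<le> X" using assms by simp
qed

lemma nat_ceiling_between:
  assumes "1 \<le> Y"
  shows "Y \<le> real (nat \<lceil>Y\<rceil>)" and "real (nat \<lceil>Y\<rceil>) \<le> 2 * Y"
proof -
  show "Y \<le> real (nat \<lceil>Y\<rceil>)" by linarith
  have "of_int \<lceil>Y\<rceil> < Y + 1" by linarith
  then show "real (nat \<lceil>Y\<rceil>) \<le> 2 * Y" using assms by linarith
qed

text \<open>The bias stays below the envelope of \<open>Fcls p\<close> on every cell, while \<open>n \<delta>\<^sup>2 \<lesssim> m\<close> keeps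
  the two hypotheses of each flip statistically indistinguishable.\<close>

lemma part_b_design:
  assumes p: "p > 0" and n: "n \<ge> 1"
  obtains m \<delta> where "hypercube m \<delta>" "\<And>j. j < m \<Longrightarrow> 2 * \<delta> \<le> real (Suc j) powr (-1/p)"
    "4 * real n * \<delta>^2 \<le> m / 2" "\<delta>^2 * (1/8) = 1/128 * real n powr (-2/(2+p))"
proof -
  define X where "X = real n powr (p/(p+2))"
  define m where "m = nat \<lfloor>X\<rfloor>"
  define \<delta> where "\<delta> = (1/4) * real n powr (-1/(p+2))"
  have n1: "1 \<le> real n" using n by simp
  have X1: "1 \<le> X" unfolding X_def using n1 p by (intro ge_one_powr_ge_zero) auto
  have mX: "real m \<le> X" and mX2: "X/2 \<le> real m"
    unfolding m_def using nat_floor_between[OF X1] by auto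
  have "real n powr (-1/(p+2)) \<le> 1"
    using powr_mono[of "-1/(p+2)" 0 "real n"] n1 p by simp
  then have hc: "hypercube m \<delta>"
    using mX2 X1 unfolding \<delta>_def by unfold_locales auto
  have env: "2 * \<delta> \<le> real (Suc j) powr (-1/p)" if j: "j < m" for j
  proof -
    have "X powr (-1/p) \<le> real (Suc j) powr (-1/p)"
      using j mX p by (intro powr_mono2') auto
    moreover have "X powr (-1/p) = real n powr (-1/(p+2))"
      unfolding X_def using p n1 by (simp add: powr_powr)
    moreover have "0 \<le> real n powr (-1/(p+2))" by simp
    ultimately show ?thesis unfolding \<delta>_def by linarith
  qed
  have dsq: "\<delta>^2 = (1/16) * real n powr (-2/(p+2))"
    unfolding \<delta>_def power2_eq_square using n1 by (simp add: powr_add[symmetric])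
  have small: "4 * real n * \<delta>^2 \<le> m / 2"
  proof -
    have "real n * real n powr (-2/(p+2)) = real n powr (1 + -2/(p+2))"
      using powr_add[of "real n" 1 "-2/(p+2)"] n1 by simp
    also have "1 + -2/(p+2) = p/(p+2)" using p by (simp add: field_simps)
    finally have "4 * real n * \<delta>^2 = X / 4" unfolding dsq X_def by (simp add: field_simps)
    then show ?thesis using mX2 X1 by simp
  qed
  have "\<delta>^2 * (1/8) = 1/128 * real n powr (-2/(2+p))"
    unfolding dsq by (simp add: add.commute)
  then show ?thesis using hc env small that by blast
qed

lemma minimax_lower_bound:
  assumes p: "p > 0" and n: "n \<ge> 1"
  shows "ennreal (1/128 * real n powr (-2/(2+p))) \<le>
    (INF fh\<in>estimators n. SUP M\<in>{M\<in>dists {0,1}. eta_in M (Fcls p)}. risk n M fh)"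
proof (rule INF_greatest)
  fix fh assume fh: "fh \<in> estimators n"
  obtain m \<delta> where hc: "hypercube m \<delta>" and env: "\<And>j. j < m \<Longrightarrow> 2 * \<delta> \<le> real (Suc j) powr (-1/p)"
    and small: "4 * real n * \<delta>^2 \<le> m / 2" and rate: "\<delta>^2 * (1/8) = 1/128 * real n powr (-2/(2+p))"
    using part_b_design[OF p n] by blast
  interpret hypercube m \<delta> by (rule hc)
  obtain \<sigma> where "\<delta>^2 * (1/8) \<le> hc_risk n m \<delta> fh \<sigma>"
    using assouad_sign[OF overlap_bounded_bias[OF hc _ small]] by blast
  then have "ennreal (1/128 * real n powr (-2/(2+p))) \<le> risk n (hc_dist m \<delta> \<sigma>) fh"
    unfolding rate[symmetric] by (simp add: risk_hc_dist[OF fh] ennreal_leI)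
  also have "\<dots> \<le> (SUP M\<in>{M\<in>dists {0,1}. eta_in M (Fcls p)}. risk n M fh)"
    by (rule SUP_upper) (simp add: hc_dist_dists eta_in_hc_dist[OF env])
  finally show "ennreal (1/128 * real n powr (-2/(2+p))) \<le> (SUP M\<in>{M\<in>dists {0,1}. eta_in M (Fcls p)}. risk n M fh)" .
qed

text \<open>Design for part (c): \<open>m \<approx> (2n) powr (p/(p-1))\<close> cells, so that a sample of size \<open>n\<close>
  misses most cells, yet the oracle error \<open>m powr (-1/p)\<close> is of order \<open>n powr (-1/(p-1))\<close>.\<close>

lemma part_c_rate:
  assumes p: "p \<ge> 2" and n: "n \<ge> 1" and M: "0 < M" "M \<le> 2 * (2 * real n) powr (p/(p-1))"
  shows "real n powr (-1/(p-1)) / 4 \<le> M powr (-1/p)"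
proof -
  have n1: "1 \<le> real n" using n by simp
  have "(2 * (2 * real n) powr (p/(p-1))) powr (-1/p) \<le> M powr (-1/p)"
    using M p by (intro powr_mono2') auto
  moreover have "((2 * real n) powr (p/(p-1))) powr (-1/p) = (2 * real n) powr (-1/(p-1))"
    using p n1 by (simp add: powr_powr)
  then have "(2 * (2 * real n) powr (p/(p-1))) powr (-1/p)
             = 2 powr (-1/p) * (2 powr (-1/(p-1)) * real n powr (-1/(p-1)))"
    using n1 by (simp add: powr_mult)
  moreover have "(1/2) * ((1/2) * real n powr (-1/(p-1)))
                 \<le> 2 powr (-1/p) * (2 powr (-1/(p-1)) * real n powr (-1/(p-1)))"
  proof (intro mult_mono mult_right_mono)
    show "1/2 \<le> 2 powr (-1/p)"
      using powr_mono[of "-1" "-1/p" 2] p by (simp add: powr_minus_divide field_simps)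
    show "1/2 \<le> 2 powr (-1/(p-1))"
      using powr_mono[of "-1" "-1/(p-1)" 2] p by (simp add: powr_minus_divide field_simps)
  qed auto
  ultimately show ?thesis by simp
qed

lemma part_c_design:
  assumes p: "p \<ge> 2" and n: "n \<ge> 1"
  obtains m :: nat where "m > 0" "real n / m \<le> real m powr (-1/p) / 2"
    "real n powr (-1/(p-1)) / 4 \<le> real m powr (-1/p)"
proof -
  define Y where "Y = (2 * real n) powr (p/(p-1))"
  define m where "m = nat \<lceil>Y\<rceil>"
  have n1: "1 \<le> real n" using n by simp
  have Y2: "2 * real n \<le> Y"
  proof -
    have "(2 * real n) powr 1 \<le> (2 * real n) powr (p/(p-1))"
      using n1 p by (intro powr_mono) (auto simp: field_simps)
    then show ?thesis unfolding Y_def using n1 by simp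
  qed
  have mY: "Y \<le> real m" "real m \<le> 2 * Y"
    unfolding m_def using nat_ceiling_between[of Y] Y2 n1 by auto
  have m0: "m > 0" using mY Y2 n1 by simp
  have "real n / m \<le> real m powr (-1/p) / 2"
  proof -
    have "real m powr (1 + -1/p) = real m * real m powr (-1/p)"
      using powr_add[of "real m" 1 "-1/p"] m0 by simp
    moreover have "1 + -1/p = (p-1)/p" using p by (simp add: field_simps)
    moreover have "Y powr ((p-1)/p) = 2 * real n" unfolding Y_def using p n1 by (simp add: powr_powr)
    moreover have "Y powr ((p-1)/p) \<le> real m powr ((p-1)/p)"
      using mY Y2 n1 p by (intro powr_mono2) auto
    ultimately have "2 * real n \<le> real m * real m powr (-1/p)" by simp
    then show ?thesis using m0 by (simp add: field_simps)
  qed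
  moreover have "real n powr (-1/(p-1)) / 4 \<le> real m powr (-1/p)"
    using part_c_rate[OF p n] mY m0 unfolding Y_def by simp
  ultimately show ?thesis using that m0 by blast
qed

text \<open>In the noiseless hypercube (\<open>\<delta> = 1/2\<close>) the oracle error \<open>K\<close> of \<open>hc_oracle\<close> is at most
  \<open>1 - m powr (-1/p)\<close> per cell, so a lower bound \<open>(1 - n/m)/4\<close> on the estimator's risk
  leaves an excess of at least \<open>(m powr (-1/p) - n/m)/4\<close>.\<close>

lemma oracle_error_le:
  assumes m: "m > 0" and p: "p > 0"
  shows "(real m powr (-1/p) - q) / 4 \<le> (1/2)^2 * (1 - q) - (\<Sum>j<m. (1 - real (Suc j) powr (-1/p))^2) / (4*m)"
proof -
  define b where "b j = real (Suc j) powr (-1/p)" for j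
  have "(\<Sum>j<m. ((1 - q) - (1 - b j)^2) / (4*m))
        = (\<Sum>j<m. (1 - q) / (4*m)) - (\<Sum>j<m. (1 - b j)^2) / (4*m)"
    by (simp add: diff_divide_distrib sum_subtractf sum_divide_distrib)
  also have "(\<Sum>j<m. (1 - q) / (4*m)) = (1/2)^2 * (1 - q)"
    using m by (simp add: power2_eq_square)
  finally have "(1/2)^2 * (1 - q) - (\<Sum>j<m. (1 - b j)^2) / (4*m) = (\<Sum>j<m. ((1 - q) - (1 - b j)^2) / (4*m))"
    by simp
  also have "\<dots> \<ge> (\<Sum>j<m. (real m powr (-1/p) - q) / (4*m))"
  proof (rule sum_mono)
    fix j assume "j \<in> {..<m}"
    then have "real m powr (-1/p) \<le> b j" unfolding b_def using p by (intro powr_mono2') auto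
    moreover have "b j \<le> 1" unfolding b_def using p powr_mono[of "-1/p" 0 "real (Suc j)"] by simp
    moreover have "0 \<le> b j" unfolding b_def by simp
    ultimately have "(1 - b j)^2 \<le> 1 - b j" by (simp add: power2_eq_square mult_left_le_one_le)
    then have "real m powr (-1/p) - q \<le> (1 - q) - (1 - b j)^2"
      using \<open>real m powr (-1/p) \<le> b j\<close> by linarith
    then show "(real m powr (-1/p) - q) / (4*m) \<le> ((1 - q) - (1 - b j)^2) / (4*m)"
      using m by (intro divide_right_mono) auto
  qed
  also have "(\<Sum>j<m. (real m powr (-1/p) - q) / (4*m)) = (real m powr (-1/p) - q) / 4" using m by simp
  finally show ?thesis unfolding b_def .
qed

lemma minimax_excess_lower_bound:
  assumes p: "p \<ge> 2" and n: "n \<ge> 1"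
  shows "ereal (1/128 * real n powr (-1/(p-1))) \<le>
    (INF fh\<in>estimators n. SUP M\<in>dists {0..1}.
          enn2ereal (risk n M fh) - (INF f\<in>Fcls p. enn2ereal (sqdist M f (eta M))))"
proof (rule INF_greatest)
  fix fh assume fh: "fh \<in> estimators n"
  have p0: "p > 0" using p by simp
  obtain m where m0: "m > 0" and nm: "real n / m \<le> real m powr (-1/p) / 2"
    and rate: "real n powr (-1/(p-1)) / 4 \<le> real m powr (-1/p)"
    by (rule part_c_design[OF p n])
  interpret hypercube m "1/2" using m0 by unfold_locales auto
  obtain \<sigma> where R: "(1/2)^2 * (1 - real n / m) \<le> hc_risk n m (1/2) fh \<sigma>"
    using assouad_sign[OF overlap_full_bias[OF m0]] by blast
  define K where "K = (\<Sum>j<m. (1 - real (Suc j) powr (-1/p))^2) / (4*m)"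
  have K0: "0 \<le> K" unfolding K_def by (auto intro!: divide_nonneg_nonneg sum_nonneg)
  have "1/128 * real n powr (-1/(p-1)) \<le> real n powr (-1/(p-1)) / 32" by simp
  also have "\<dots> \<le> real m powr (-1/p) / 8" using rate by simp
  also have "\<dots> \<le> (real m powr (-1/p) - real n / m) / 4" using nm by simp
  also have "\<dots> \<le> hc_risk n m (1/2) fh \<sigma> - K"
    using oracle_error_le[OF m0 p0, of "real n / m"] R unfolding K_def by linarith
  finally have excess: "1/128 * real n powr (-1/(p-1)) \<le> hc_risk n m (1/2) fh \<sigma> - K" .
  have "ereal (1/128 * real n powr (-1/(p-1))) \<le> ereal (hc_risk n m (1/2) fh \<sigma>) - ereal K"
    using excess by simp
  also have "\<dots> \<le> enn2ereal (risk n (hc_dist m (1/2) \<sigma>) fh)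
                  - (INF f\<in>Fcls p. enn2ereal (sqdist (hc_dist m (1/2) \<sigma>) f (eta (hc_dist m (1/2) \<sigma>))))"
  proof (rule ereal_minus_mono)
    show "ereal (hc_risk n m (1/2) fh \<sigma>) \<le> enn2ereal (risk n (hc_dist m (1/2) \<sigma>) fh)"
      using hc_risk_nonneg by (simp add: risk_hc_dist[OF fh] enn2ereal_ennreal)
    obtain f where fF: "f \<in> Fcls p" and fK: "sqdist (hc_dist m (1/2) \<sigma>) f (eta (hc_dist m (1/2) \<sigma>)) = ennreal K"
      using hc_oracle[OF m0 p0, of \<sigma>] unfolding K_def by blast
    have "(INF f\<in>Fcls p. enn2ereal (sqdist (hc_dist m (1/2) \<sigma>) f (eta (hc_dist m (1/2) \<sigma>))))
          \<le> enn2ereal (sqdist (hc_dist m (1/2) \<sigma>) f (eta (hc_dist m (1/2) \<sigma>)))"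
      by (rule INF_lower[OF fF])
    also have "\<dots> = ereal K" using K0 by (simp add: fK enn2ereal_ennreal)
    finally show "(INF f\<in>Fcls p. enn2ereal (sqdist (hc_dist m (1/2) \<sigma>) f (eta (hc_dist m (1/2) \<sigma>)))) \<le> ereal K" .
  qed
  also have "\<dots> \<le> (SUP M\<in>dists {0..1}. enn2ereal (risk n M fh) - (INF f\<in>Fcls p. enn2ereal (sqdist M f (eta M))))"
    by (rule SUP_upper) (use hc_dist_dists dists_mono in blast)
  finally show "ereal (1/128 * real n powr (-1/(p-1))) \<le> (SUP M\<in>dists {0..1}. enn2ereal (risk n M fh) - (INF f\<in>Fcls p. enn2ereal (sqdist M f (eta M))))" .
qed

theorem theorem7:
  shows "\<exists>c>0. \<forall>p::real. p > 0 \<longrightarrow>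
    (\<exists>A>0. \<forall>n eps. eps > 0 \<longrightarrow> H2 (Fcls p) eps n \<le> ereal ((A / eps) powr p))
  \<and> (\<forall>n::nat. n \<ge> 1 \<longrightarrow>
       (INF fh\<in>estimators n. SUP M\<in>{M\<in>dists {0,1}. eta_in M (Fcls p)}. risk n M fh)
         \<ge> ennreal (c * real n powr (-2 / (2 + p))))
  \<and> (p \<ge> 2 \<longrightarrow> (\<forall>n::nat. n \<ge> 1 \<longrightarrow>
       (INF fh\<in>estimators n. SUP M\<in>dists {0..1}.
          enn2ereal (risk n M fh) - (INF f\<in>Fcls p. enn2ereal (sqdist M f (eta M))))
         \<ge> ereal (c * real n powr (-1 / (p - 1)))))"
proof (rule exI[of _ "1/128"], intro conjI allI impI)
  show "(0::real) < 1/128" by simp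
next
  fix p :: real assume "p > 0"
  then show "\<exists>A>0. \<forall>n eps. eps > 0 \<longrightarrow> H2 (Fcls p) eps n \<le> ereal ((A / eps) powr p)"
    by (rule entropy_bound)
next
  fix p :: real and n :: nat assume "p > 0" "n \<ge> 1"
  then show "(INF fh\<in>estimators n. SUP M\<in>{M\<in>dists {0,1}. eta_in M (Fcls p)}. risk n M fh)
         \<ge> ennreal (1/128 * real n powr (-2 / (2 + p)))"
    by (rule minimax_lower_bound)
next
  fix p :: real and n :: nat assume "p > 0" and p2: "p \<ge> 2" and n: "n \<ge> 1"
  show "(INF fh\<in>estimators n. SUP M\<in>dists {0..1}.
          enn2ereal (risk n M fh) - (INF f\<in>Fcls p. enn2ereal (sqdist M f (eta M))))
         \<ge> ereal (1/128 * real n powr (-1 / (p - 1)))"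
    using minimax_excess_lower_bound[OF p2 n] by simp
qed

end
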